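(* Let $m\ge2$, $q\ge2$ be integers, $A$ a primitive $m\times m$ matrix with entries in $\{0,1\}$, and $\Sigma_A=\{(x_k)_{k\ge1}\in\{0,\dots,m-1\}^{\mathbb N}:\ A(x_k,x_{k+1})=1 \ \forall k\}$. Let $(t_i)_{i=0}^{m-1}$ be the unique vector with $t_i>1$ and $t_i^q=\sum_j A(i,j)t_j$ for all $i$. Then the unique Borel probability measure $\mu$ on $\Sigma_A$ maximizing $s(\Sigma_A,\mu)$ is the Markov measure with initial probability vector $\mathbf{p}=\bigl(\sum_{i=0}^{m-1}t_i\bigr)^{-1}(t_0,\dots,t_{m-1})$ and transition probabilities $p_{ij}=t_j/t_i^q$ if $A(i,j)=1$ (and $p_{ij}=0$ otherwise).
   Context: A non-negative matrix is primitive if some power is strictly positive. For a closed $\Omega\subset\Sigma_m$ and Borel probability $\mu$ on $\Omega$: $[u]$ is the cylinder of sequences beginning with word $u$, $\alpha_k=\{\Omega\cap[u]:\ u\in\{0,\dots,m-1\}^k,\ \Omega\cap[u]\ne\emptyset\}$, $H_m^\mu(\alpha)=-\sum_{C\in\alpha}\mu(C)\log_m\mu(C)$, and $s(\Omega,\mu)=(q-1)^2\sum_{k\ge1}H_m^\mu(\alpha_k)/q^{k+1}$. *)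

theory Defs
  imports "HOL-Probability.Probability"
begin

text \<open>Sequences in the full shift are functions nat => nat (index k >= 0 corresponds
to the paper's index k+1); nat => nat carries the product topology (Function_Topology),
so borel is the Borel sigma-algebra of the shift space.\<close>

definition full_shift :: "nat \<Rightarrow> (nat \<Rightarrow> nat) set" where
  "full_shift m = {x. \<forall>k. x k < m}"

definition SigmaA :: "nat \<Rightarrow> (nat \<Rightarrow> nat \<Rightarrow> nat) \<Rightarrow> (nat \<Rightarrow> nat) set" where
  "SigmaA m A = {x. (\<forall>k. x k < m) \<and> (\<forall>k. A (x k) (x (Suc k)) = 1)}"

fun matpow :: "nat \<Rightarrow> (nat \<Rightarrow> nat \<Rightarrow> nat) \<Rightarrow> nat \<Rightarrow> nat \<Rightarrow> nat \<Rightarrow> nat" where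
  "matpow m A 0 = (\<lambda>i j. if i = j then 1 else 0)"
| "matpow m A (Suc n) = (\<lambda>i j. \<Sum>k<m. matpow m A n i k * A k j)"

definition primitive :: "nat \<Rightarrow> (nat \<Rightarrow> nat \<Rightarrow> nat) \<Rightarrow> bool" where
  "primitive m A \<longleftrightarrow> (\<exists>n. \<forall>i<m. \<forall>j<m. matpow m A n i j > 0)"

definition cyl :: "nat list \<Rightarrow> (nat \<Rightarrow> nat) set" where
  "cyl u = {x. \<forall>i<length u. x i = u ! i}"

definition alpha :: "nat \<Rightarrow> (nat \<Rightarrow> nat) set \<Rightarrow> nat \<Rightarrow> (nat \<Rightarrow> nat) set set" where
  "alpha m \<Omega> k = {\<Omega> \<inter> cyl u | u. length u = k \<and> set u \<subseteq> {..<m} \<and> \<Omega> \<inter> cyl u \<noteq> {}}"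

text \<open>Entropy with base-m logarithm; note 0 * log m 0 = 0 in Isabelle (ln 0 = 0),
matching the convention 0 log 0 = 0.\<close>
definition Hm :: "nat \<Rightarrow> (nat \<Rightarrow> nat) measure \<Rightarrow> (nat \<Rightarrow> nat) set set \<Rightarrow> real" where
  "Hm m \<mu> \<alpha> = - (\<Sum>C\<in>\<alpha>. measure \<mu> C * log (real m) (measure \<mu> C))"

definition s_dim :: "nat \<Rightarrow> nat \<Rightarrow> (nat \<Rightarrow> nat) set \<Rightarrow> (nat \<Rightarrow> nat) measure \<Rightarrow> real" where
  "s_dim m q \<Omega> \<mu> = (real q - 1)^2 * (\<Sum>k. Hm m \<mu> (alpha m \<Omega> (Suc k)) / real q ^ (Suc k + 1))"

definition borel_prob_on :: "(nat \<Rightarrow> nat) set \<Rightarrow> (nat \<Rightarrow> nat) measure \<Rightarrow> bool" where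
  "borel_prob_on \<Omega> \<mu> \<longleftrightarrow> prob_space \<mu> \<and> sets \<mu> = sets (restrict_space borel \<Omega>)"

definition markov_measure :: "nat \<Rightarrow> (nat \<Rightarrow> nat) set \<Rightarrow> (nat \<Rightarrow> real) \<Rightarrow> (nat \<Rightarrow> nat \<Rightarrow> real)
    \<Rightarrow> (nat \<Rightarrow> nat) measure \<Rightarrow> bool" where
  "markov_measure m \<Omega> p P \<mu> \<longleftrightarrow> borel_prob_on \<Omega> \<mu> \<and>
     (\<forall>u. u \<noteq> [] \<longrightarrow> set u \<subseteq> {..<m} \<longrightarrow>
        measure \<mu> (\<Omega> \<inter> cyl u) = p (u ! 0) * (\<Prod>i<length u - 1. P (u ! i) (u ! Suc i)))"

end

theory Submission
  imports Defs
begin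

text \<open>
  For a Borel probability measure mu on Omega = Sigma_A let f(u) be the mass of
  the cylinder of the word u, and a(n) = - sum over words of length n of f(u) ln f(u) the
  natural-log block entropy.  Using the weights t one finds the exact recursion
  a(n+1) = a(n) + q b(n) - b(n+1) - d(n), where b(n) is the mean of the bounded potential
  ln t(last letter) and d(n) >= 0 is a sum of gaps in the Gibbs inequality, one for each word u
  of length n and each letter j.  Summing the recursion against q^-k yields the closed form
  s(Omega, mu) = s_max - (q-1) D(mu) / ln m with the total defect D(mu) = sum d(n) q^-(n+1) >= 0,
  and D(mu) = 0 exactly when every conditional probability of j after i equals t_j / t_i^q,
  i.e. when mu is the stated Markov measure.

  Primitivity of A is
  what guarantees, in the paper, that the weights t exist and are unique; since they are
  given as a hypothesis here, the argument itself never uses it.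
\<close>

section \<open>Real-analysis preliminaries\<close>

definition eta :: "real \<Rightarrow> real" where
  "eta x = - x * ln x"

lemma eta_nonneg: "0 \<le> x \<Longrightarrow> x \<le> 1 \<Longrightarrow> 0 \<le> eta x"
  unfolding eta_def by (cases "x = 0") (auto simp: mult_nonneg_nonpos)

text \<open>The gap in the Gibbs inequality for one child \<open>g\<close> of a mass \<open>F\<close> carrying weight \<open>w\<close>
  out of a total weight \<open>W\<close>; with \<open>x = F w / (W g)\<close> it equals \<open>g (x - 1 - ln x)\<close>.\<close>
definition gibbs_gap :: "real \<Rightarrow> real \<Rightarrow> real \<Rightarrow> real \<Rightarrow> real" where
  "gibbs_gap F W w g = F * w / W - g - g * ln F - g * ln w + g * ln W - eta g"

lemma gibbs_gap:
  assumes "W > 0" "w \<ge> 0" "g \<ge> 0" "F \<ge> g" "w = 0 \<Longrightarrow> g = 0"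
  shows "0 \<le> gibbs_gap F W w g" and "gibbs_gap F W w g = 0 \<longleftrightarrow> g = F * w / W"
proof -
  have "0 \<le> gibbs_gap F W w g \<and> (gibbs_gap F W w g = 0 \<longleftrightarrow> g = F * w / W)"
  proof (cases "g = 0")
    case True
    then show ?thesis using assms by (simp add: gibbs_gap_def eta_def)
  next
    case False
    hence g: "g > 0" and F: "F > 0" and w: "w > 0" using assms by (auto simp: less_le)
    define x where "x = F * w / (W * g)"
    have x: "x > 0" unfolding x_def using F w g assms by simp
    have ln_x: "ln x = ln F + ln w - ln W - ln g"
      unfolding x_def using F w g assms by (simp add: ln_div ln_mult)
    have gap: "gibbs_gap F W w g = g * (x - 1 - ln x)"
      unfolding gibbs_gap_def eta_def ln_x using g by (simp add: x_def algebra_simps)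
    have "0 \<le> x - 1 - ln x" using ln_le_minus_one[OF x] by simp
    moreover have "x - 1 - ln x = 0 \<longleftrightarrow> x = 1" using ln_eq_minus_one[OF x] by auto
    moreover have "x = 1 \<longleftrightarrow> g = F * w / W"
      unfolding x_def using g assms by (auto simp: field_simps)
    ultimately show ?thesis using gap g by simp
  qed
  thus "0 \<le> gibbs_gap F W w g" "gibbs_gap F W w g = 0 \<longleftrightarrow> g = F * w / W" by auto
qed

lemma linear_le_exponential: "real n + 1 \<le> 2 * (3/2::real) ^ n"
proof (induction n)
  case (Suc n)
  show ?case
  proof (cases n)
    case (Suc k)
    have "real (Suc n) + 1 \<le> (3/2) * (real n + 1)" using Suc by simp
    also have "\<dots> \<le> (3/2) * (2 * (3/2) ^ n)" using Suc.IH by simp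
    finally show ?thesis by simp
  qed simp
qed simp

lemma summable_linear_growth:
  fixes x :: "nat \<Rightarrow> real" and Q K :: real
  assumes Q: "Q \<ge> 2" and bound: "\<And>n. \<bar>x n\<bar> \<le> K * (real n + 1)"
  shows "summable (\<lambda>n. x n * (1/Q) ^ n)"
proof (rule summable_comparison_test[where g="\<lambda>n. 2 * \<bar>K\<bar> * (3/4) ^ n"])
  show "summable (\<lambda>n. 2 * \<bar>K\<bar> * (3/4::real) ^ n)"
    by (intro summable_mult summable_geometric) simp
  show "\<exists>N. \<forall>n\<ge>N. norm (x n * (1/Q) ^ n) \<le> 2 * \<bar>K\<bar> * (3/4) ^ n"
  proof (intro exI allI impI)
    fix n :: nat
    have r: "0 \<le> (1/Q) ^ n" "(1/Q) ^ n \<le> (1/2) ^ n" using Q by (auto intro!: power_mono)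
    have "K * (real n + 1) \<le> \<bar>K\<bar> * (real n + 1)" by (intro mult_right_mono) auto
    hence "\<bar>x n\<bar> \<le> \<bar>K\<bar> * (real n + 1)" using bound[of n] by linarith
    hence "norm (x n * (1/Q) ^ n) \<le> (\<bar>K\<bar> * (real n + 1)) * (1/Q) ^ n"
      using r by (simp add: abs_mult mult_right_mono)
    also have "\<dots> \<le> (\<bar>K\<bar> * (2 * (3/2) ^ n)) * (1/2) ^ n"
      using linear_le_exponential[of n] r by (intro mult_mono mult_left_mono) auto
    also have "\<dots> = 2 * \<bar>K\<bar> * (3/4) ^ n" by (simp add: power_mult_distrib[symmetric])
    finally show "norm (x n * (1/Q) ^ n) \<le> 2 * \<bar>K\<bar> * (3/4) ^ n" .
  qed
qed

text \<open>The summation identity behind the closed form of \<open>s\<close>: if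
  \<open>a\<^sub>n\<^sub>+\<^sub>1 = a\<^sub>n + Q b\<^sub>n - b\<^sub>n\<^sub>+\<^sub>1 - d\<^sub>n\<close> with \<open>a\<^sub>0 = 0\<close>, then the weighted series of \<open>a\<close> is determined
  by \<open>b\<^sub>0\<close> and the weighted series of \<open>d\<close> (multiply by \<open>Q\<^sup>-\<^sup>n\<^sup>-\<^sup>1\<close> and telescope).\<close>
lemma telescoping_series:
  fixes a b d :: "nat \<Rightarrow> real" and Q K :: real
  assumes Q: "Q \<ge> 2" and a0: "a 0 = 0"
    and rec: "\<And>n. a (Suc n) = a n + Q * b n - b (Suc n) - d n"
    and a_bound: "\<And>n. \<bar>a n\<bar> \<le> K * (real n + 1)"
    and b_bound: "\<And>n. \<bar>b n\<bar> \<le> K"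
    and d_bound: "\<And>n. \<bar>d n\<bar> \<le> K * (real n + 1)"
  shows "summable (\<lambda>n. d n / Q ^ Suc n)"
    and "(\<lambda>k. a (Suc k) / Q ^ (Suc k + 1)) sums ((b 0 - (\<Sum>n. d n / Q ^ Suc n)) / (Q - 1))"
proof -
  define r where "r = 1 / Q"
  have r: "0 < r" "r < 1" "Q * r = 1" using Q by (auto simp: r_def)
  have over_Q: "c / Q ^ n = c * r ^ n" for c n
    by (simp add: r_def power_one_over divide_inverse power_inverse)
  define X where "X = (\<Sum>n. a n * r ^ n)"
  have aX: "(\<lambda>n. a n * r ^ n) sums X"
    unfolding X_def r_def by (intro summable_sums summable_linear_growth[OF Q a_bound])
  hence a1: "(\<lambda>n. a (Suc n) * r ^ Suc n) sums X" by (subst sums_Suc_iff) (simp add: a0)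
  have a_diff: "(\<lambda>n. a (Suc n) * r ^ Suc n - a n * r ^ Suc n) sums (X - r * X)"
    using sums_diff[OF a1 sums_mult[OF aX, of r]] by (simp add: algebra_simps)
  have "(\<lambda>n. d n * r ^ n) sums (\<Sum>n. d n * r ^ n)"
    unfolding r_def by (intro summable_sums summable_linear_growth[OF Q d_bound])
  hence dD: "(\<lambda>n. d n * r ^ Suc n) sums (r * (\<Sum>n. d n * r ^ n))"
    by (auto dest: sums_mult[of _ _ r] simp: algebra_simps)
  thus "summable (\<lambda>n. d n / Q ^ Suc n)" unfolding over_Q by (rule sums_summable)
  have "(\<lambda>n. b n * r ^ n) \<longlonglongrightarrow> 0"
  proof (rule Lim_null_comparison[where g="\<lambda>n. \<bar>K\<bar> * r ^ n"])
    show "\<forall>\<^sub>F n in sequentially. norm (b n * r ^ n) \<le> \<bar>K\<bar> * r ^ n"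
      using b_bound r by (intro always_eventually allI)
        (simp add: abs_mult mult_right_mono order.trans[OF _ abs_ge_self])
    show "(\<lambda>n. \<bar>K\<bar> * r ^ n) \<longlonglongrightarrow> 0"
      using r by (intro tendsto_mult_right_zero LIMSEQ_power_zero) auto
  qed
  from telescope_sums'[OF this]
  have "(\<lambda>n. b n * r ^ n - b (Suc n) * r ^ Suc n) sums b 0" by simp
  hence "(\<lambda>n. (b n * r ^ n - b (Suc n) * r ^ Suc n) - d n * r ^ Suc n)
      sums (b 0 - r * (\<Sum>n. d n * r ^ n))"
    using dD by (rule sums_diff)
  moreover have "(b n * r ^ n - b (Suc n) * r ^ Suc n) - d n * r ^ Suc n
      = a (Suc n) * r ^ Suc n - a n * r ^ Suc n" for n
    using r(3) by (simp add: rec algebra_simps)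
  ultimately have "X - r * X = b 0 - r * (\<Sum>n. d n * r ^ n)"
    using a_diff by (simp add: sums_unique2)
  moreover have "(\<Sum>n. d n / Q ^ Suc n) = r * (\<Sum>n. d n * r ^ n)"
    using dD unfolding over_Q by (simp add: sums_iff)
  ultimately have "r * X = (b 0 - (\<Sum>n. d n / Q ^ Suc n)) / (Q - 1)"
    using r Q by (simp add: r_def field_simps)
  moreover have "(\<lambda>k. a (Suc k) / Q ^ (Suc k + 1)) sums (r * X)"
    using sums_mult[OF a1, of r] unfolding over_Q by (simp add: algebra_simps)
  ultimately show "(\<lambda>k. a (Suc k) / Q ^ (Suc k + 1)) sums ((b 0 - (\<Sum>n. d n / Q ^ Suc n)) / (Q - 1))"
    by simp
qed

text \<open>The same identity when \<open>a, d \<ge> 0\<close> and \<open>0 \<le> b \<le> K\<close>; the recursion then forces the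
  linear growth bounds needed above.\<close>
lemma nonneg_recursion_series:
  fixes a b d :: "nat \<Rightarrow> real" and Q K :: real
  assumes Q: "Q \<ge> 2" and a0: "a 0 = 0"
    and rec: "\<And>n. a (Suc n) = a n + Q * b n - b (Suc n) - d n"
    and a_nonneg: "\<And>n. 0 \<le> a n" and d_nonneg: "\<And>n. 0 \<le> d n"
    and b_nonneg: "\<And>n. 0 \<le> b n" and b_le: "\<And>n. b n \<le> K"
  shows "summable (\<lambda>n. d n / Q ^ Suc n)"
    and "(\<lambda>k. a (Suc k) / Q ^ (Suc k + 1)) sums ((b 0 - (\<Sum>n. d n / Q ^ Suc n)) / (Q - 1))"
proof -
  have K: "0 \<le> K" using b_nonneg[of 0] b_le[of 0] by simp
  have Qb: "Q * b n \<le> Q * K" for n using Q b_le[of n] by (intro mult_left_mono) auto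
  have a_le: "a n \<le> Q * K * real n" for n
  proof (induction n)
    case (Suc n)
    have "a (Suc n) \<le> Q * K * real n + Q * K"
      using Suc rec[of n] Qb[of n] b_nonneg[of "Suc n"] d_nonneg[of n] by linarith
    thus ?case by (simp add: distrib_left)
  qed (simp add: a0)
  have lin: "Q * K * real n \<le> Q * K * (real n + 1)" for n using Q K by (intro mult_left_mono) auto
  have "\<bar>a n\<bar> \<le> Q * K * (real n + 1)" for n using a_nonneg[of n] a_le[of n] lin[of n] by simp
  moreover have "\<bar>b n\<bar> \<le> Q * K" for n
    using b_nonneg[of n] b_le[of n] mult_right_mono[of 1 Q K] Q K by simp
  moreover have "\<bar>d n\<bar> \<le> Q * K * (real n + 1)" for n
    using rec[of n] a_le[of n] a_nonneg[of "Suc n"] b_nonneg[of "Suc n"] Qb[of n] d_nonneg[of n]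
    by (simp add: distrib_left)
  ultimately show "summable (\<lambda>n. d n / Q ^ Suc n)"
    and "(\<lambda>k. a (Suc k) / Q ^ (Suc k + 1)) sums ((b 0 - (\<Sum>n. d n / Q ^ Suc n)) / (Q - 1))"
    using telescoping_series[OF Q a0 rec] by blast+
qed

section \<open>Words, cylinders and measures on the subshift\<close>

definition markov_weight :: "(nat \<Rightarrow> real) \<Rightarrow> (nat \<Rightarrow> nat \<Rightarrow> real) \<Rightarrow> nat list \<Rightarrow> real" where
  "markov_weight p P u = p (u ! 0) * (\<Prod>i<length u - 1. P (u ! i) (u ! Suc i))"

lemma markov_weight_snoc:
  assumes "u \<noteq> []"
  shows "markov_weight p P (u @ [j]) = markov_weight p P u * P (last u) j"
proof -
  obtain n where n: "length u = Suc n" using assms by (cases u) auto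
  have "(\<Prod>i<n. P ((u @ [j]) ! i) ((u @ [j]) ! Suc i)) = (\<Prod>i<n. P (u ! i) (u ! Suc i))"
    using n by (intro prod.cong) (auto simp: nth_append)
  moreover have "last u = u ! n" using assms n by (simp add: last_conv_nth)
  ultimately show ?thesis
    unfolding markov_weight_def using n assms by (simp add: nth_append)
qed

lemma coordinate_measurable[measurable]:
  "(\<lambda>x::nat \<Rightarrow> nat. x i) \<in> measurable borel (count_space UNIV)"
  using measurable_product_coordinates[of i] sets_borel_eq_count_space
  by (metis measurable_cong_sets)

lemma cyl_borel[measurable]: "cyl u \<in> sets borel"
  unfolding cyl_def by measurable

lemma SigmaA_borel[measurable]: "SigmaA m A \<in> sets borel"
  unfolding SigmaA_def by measurable

lemma borel_prob_on_space:
  assumes "borel_prob_on \<Omega> \<mu>"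
  shows "space \<mu> = \<Omega>"
proof -
  have "sets \<mu> = sets (restrict_space borel \<Omega>)" using assms unfolding borel_prob_on_def by (rule conjunct2)
  hence "space \<mu> = space (restrict_space borel \<Omega>)" by (rule sets_eq_imp_space_eq)
  thus ?thesis by (simp only: space_restrict_space space_borel Int_UNIV_right)
qed

lemma borel_prob_on_sets: "borel_prob_on \<Omega> \<mu> \<Longrightarrow> X \<in> sets borel \<Longrightarrow> \<Omega> \<inter> X \<in> sets \<mu>"
  unfolding borel_prob_on_def by (auto simp: sets_restrict_space)

locale subshift =
  fixes m :: nat and A :: "nat \<Rightarrow> nat \<Rightarrow> nat"
begin

abbreviation \<Omega> :: "(nat \<Rightarrow> nat) set" where "\<Omega> \<equiv> SigmaA m A"

definition words :: "nat \<Rightarrow> nat list set" where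
  "words n = {u. length u = n \<and> set u \<subseteq> {..<m}}"

lemma words_0: "words 0 = {[]}"
  by (auto simp: words_def)

lemma words_Suc: "words (Suc n) = (\<lambda>(u, j). u @ [j]) ` (words n \<times> {..<m})"
proof (intro equalityI subsetI)
  fix v assume "v \<in> words (Suc n)"
  then obtain u j where "v = u @ [j]" "length u = n" "set u \<subseteq> {..<m}" "j < m"
    unfolding words_def by (cases v rule: rev_cases) auto
  thus "v \<in> (\<lambda>(u, j). u @ [j]) ` (words n \<times> {..<m})" unfolding words_def by force
qed (auto simp: words_def)

lemma finite_words: "finite (words n)"
  by (induction n) (auto simp: words_0 words_Suc)

lemma words_snoc: "u \<in> words n \<Longrightarrow> j < m \<Longrightarrow> u @ [j] \<in> words (Suc n)"
  by (auto simp: words_def)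

lemma last_word_lt: "u \<in> words n \<Longrightarrow> u \<noteq> [] \<Longrightarrow> last u < m"
  unfolding words_def using last_in_set by blast

lemma sum_words_Suc: "(\<Sum>v\<in>words (Suc n). G v) = (\<Sum>u\<in>words n. \<Sum>j<m. G (u @ [j]))"
proof -
  have inj: "inj_on (\<lambda>(u, j). u @ [j]) (words n \<times> {..<m})" by (auto simp: inj_on_def)
  have "(\<Sum>v\<in>words (Suc n). G v) = (\<Sum>x\<in>words n \<times> {..<m}. G ((\<lambda>(u, j). u @ [j]) x))"
    unfolding words_Suc by (rule sum.reindex[OF inj, unfolded comp_def])
  also have "\<dots> = (\<Sum>u\<in>words n. \<Sum>j<m. G (u @ [j]))"
    by (subst sum.cartesian_product) (simp add: split_beta)
  finally show ?thesis .
qed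

text \<open>Abstract cylinder masses: a normalized, additive, nonnegative word function vanishing
  on forbidden transitions.  The cylinder masses of any probability measure on \<Omega> are such.\<close>
definition consistent :: "(nat list \<Rightarrow> real) \<Rightarrow> bool" where
  "consistent f \<longleftrightarrow> f [] = 1 \<and> (\<forall>u. 0 \<le> f u) \<and> (\<forall>n. \<forall>u\<in>words n. f u = (\<Sum>j<m. f (u @ [j]))) \<and>
     (\<forall>u j. u \<noteq> [] \<longrightarrow> A (last u) j \<noteq> 1 \<longrightarrow> f (u @ [j]) = 0)"

lemma consistentD:
  assumes "consistent f"
  shows "f [] = 1" "\<And>u. 0 \<le> f u" "\<And>u n. u \<in> words n \<Longrightarrow> f u = (\<Sum>j<m. f (u @ [j]))"
    "\<And>u j. u \<noteq> [] \<Longrightarrow> A (last u) j \<noteq> 1 \<Longrightarrow> f (u @ [j]) = 0"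
  using assms unfolding consistent_def by blast+

lemma consistent_sum_one: "consistent f \<Longrightarrow> (\<Sum>u\<in>words n. f u) = 1"
proof (induction n)
  case (Suc n)
  have "(\<Sum>u\<in>words (Suc n). f u) = (\<Sum>u\<in>words n. \<Sum>j<m. f (u @ [j]))" by (rule sum_words_Suc)
  also have "\<dots> = (\<Sum>u\<in>words n. f u)"
    using consistentD(3)[OF Suc.prems] by (intro sum.cong) auto
  finally show ?case using Suc by simp
qed (simp add: words_0 consistentD)

lemma consistent_le_one: "consistent f \<Longrightarrow> u \<in> words n \<Longrightarrow> f u \<le> 1"
  using member_le_sum[of u "words n" f] consistent_sum_one[of f n] finite_words consistentD(2)
  by force

definition cyl_fun :: "(nat \<Rightarrow> nat) measure \<Rightarrow> nat list \<Rightarrow> real" where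
  "cyl_fun \<mu> u = measure \<mu> (\<Omega> \<inter> cyl u)"

lemma cyl_snoc_split: "u \<in> words n \<Longrightarrow> \<Omega> \<inter> cyl u = (\<Union>j<m. \<Omega> \<inter> cyl (u @ [j]))"
proof (intro equalityI subsetI)
  fix x assume x: "x \<in> \<Omega> \<inter> cyl u"
  have "x (length u) < m" using x by (auto simp: SigmaA_def)
  moreover have "x \<in> cyl (u @ [x (length u)])" using x
    by (auto simp: cyl_def nth_append less_Suc_eq)
  ultimately show "x \<in> (\<Union>j<m. \<Omega> \<inter> cyl (u @ [j]))" using x by blast
qed (auto simp: cyl_def nth_append)

lemma cyl_forbidden: "u \<noteq> [] \<Longrightarrow> A (last u) j \<noteq> 1 \<Longrightarrow> \<Omega> \<inter> cyl (u @ [j]) = {}"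
proof safe
  fix x assume u: "u \<noteq> []" and a: "A (last u) j \<noteq> 1" and x: "x \<in> \<Omega>" "x \<in> cyl (u @ [j])"
  obtain k where k: "length u = Suc k" using u by (cases u) auto
  have "x k = last u" using x k u by (auto simp: cyl_def nth_append last_conv_nth)
  moreover have "x (Suc k) = j" using x k by (auto simp: cyl_def nth_append)
  moreover have "A (x k) (x (Suc k)) = 1" using x by (simp add: SigmaA_def)
  ultimately show "x \<in> {}" using a by simp
qed

lemma measure_cyl_Union:
  assumes bp: "borel_prob_on \<Omega> \<mu>" and S: "S \<subseteq> words n"
  shows "measure \<mu> (\<Union>u\<in>S. \<Omega> \<inter> cyl u) = (\<Sum>u\<in>S. cyl_fun \<mu> u)"
proof -
  interpret prob_space \<mu> using bp unfolding borel_prob_on_def by simp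
  have "finite S" using S finite_words finite_subset by blast
  moreover have "disjoint_family_on (\<lambda>u. \<Omega> \<inter> cyl u) S"
  proof (unfold disjoint_family_on_def, intro ballI impI)
    fix u v assume "u \<in> S" "v \<in> S" "u \<noteq> v"
    moreover have "length u = n" "length v = n" using \<open>u \<in> S\<close> \<open>v \<in> S\<close> S by (auto simp: words_def)
    ultimately show "(\<Omega> \<inter> cyl u) \<inter> (\<Omega> \<inter> cyl v) = {}"
      by (auto simp: cyl_def intro!: nth_equalityI)
  qed
  ultimately show ?thesis
    unfolding cyl_fun_def using borel_prob_on_sets[OF bp]
    by (intro measure_finite_Union) (auto simp: emeasure_eq_measure)
qed

lemma consistent_cyl_fun: "borel_prob_on \<Omega> \<mu> \<Longrightarrow> consistent (cyl_fun \<mu>)"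
proof -
  assume bp: "borel_prob_on \<Omega> \<mu>"
  interpret prob_space \<mu> using bp unfolding borel_prob_on_def by simp
  have "cyl_fun \<mu> [] = 1"
    unfolding cyl_fun_def using prob_space borel_prob_on_space[OF bp] by (simp add: cyl_def)
  moreover have "cyl_fun \<mu> u = (\<Sum>j<m. cyl_fun \<mu> (u @ [j]))" if u: "u \<in> words n" for u n
  proof -
    have "(\<lambda>j. u @ [j]) ` {..<m} \<subseteq> words (Suc n)" using words_snoc[OF u] by auto
    from measure_cyl_Union[OF bp this] show ?thesis
      unfolding cyl_fun_def cyl_snoc_split[OF u] by (simp add: sum.reindex inj_on_def)
  qed
  moreover have "cyl_fun \<mu> (u @ [j]) = 0" if "u \<noteq> []" "A (last u) j \<noteq> 1" for u j
    unfolding cyl_fun_def cyl_forbidden[OF that] by simp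
  ultimately show ?thesis
    unfolding consistent_def by (simp add: cyl_fun_def)
qed

lemma finite_dim_set_as_cylinders:
  assumes J: "J \<subseteq> {..<n}"
  shows "\<Omega> \<inter> {x. \<forall>i\<in>J. x i \<in> B i} = (\<Union>u\<in>{u\<in>words n. \<forall>i\<in>J. u ! i \<in> B i}. \<Omega> \<inter> cyl u)"
proof (intro equalityI subsetI)
  fix x assume x: "x \<in> \<Omega> \<inter> {x. \<forall>i\<in>J. x i \<in> B i}"
  define u where "u = map x [0..<n]"
  have "u \<in> words n" "\<forall>i\<in>J. u ! i \<in> B i" "x \<in> cyl u"
    using x J unfolding u_def words_def SigmaA_def cyl_def by auto
  thus "x \<in> (\<Union>u\<in>{u\<in>words n. \<forall>i\<in>J. u ! i \<in> B i}. \<Omega> \<inter> cyl u)" using x by blast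
next
  fix x assume "x \<in> (\<Union>u\<in>{u\<in>words n. \<forall>i\<in>J. u ! i \<in> B i}. \<Omega> \<inter> cyl u)"
  then obtain u where u: "u \<in> words n" "\<forall>i\<in>J. u ! i \<in> B i" "x \<in> \<Omega>" "x \<in> cyl u" by blast
  have "x i \<in> B i" if "i \<in> J" for i
    using u that J by (auto simp: cyl_def words_def)
  thus "x \<in> \<Omega> \<inter> {x. \<forall>i\<in>J. x i \<in> B i}" using u by auto
qed

text \<open>A Borel probability measure on \<Omega> is determined by its cylinder masses: extended by
  zero to the whole shift space, two such measures agree on all finite-dimensional sets, hence
  everywhere by uniqueness of product measures.\<close>
lemma cylinders_determine_measure:
  assumes bp1: "borel_prob_on \<Omega> \<mu>1" and bp2: "borel_prob_on \<Omega> \<mu>2"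
    and eq: "\<And>n u. u \<in> words n \<Longrightarrow> cyl_fun \<mu>1 u = cyl_fun \<mu>2 u"
  shows "\<mu>1 = \<mu>2"
proof -
  have id: "(\<lambda>x. x) \<in> measurable \<mu> borel" if bp: "borel_prob_on \<Omega> \<mu>" for \<mu>
    using bp measurable_restrict_space1[OF measurable_id[of "borel :: (nat \<Rightarrow> nat) measure"]]
    unfolding borel_prob_on_def by (simp cong: measurable_cong_sets)
  have ext: "emeasure (distr \<mu> borel (\<lambda>x. x)) X = emeasure \<mu> (X \<inter> \<Omega>)"
    if bp: "borel_prob_on \<Omega> \<mu>" and X: "X \<in> sets borel" for \<mu> X
    using emeasure_distr[OF id[OF bp] X] borel_prob_on_space[OF bp] by simp
  have fin: "finite_measure (distr \<mu> borel (\<lambda>x. x))" if bp: "borel_prob_on \<Omega> \<mu>" for \<mu>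
  proof -
    interpret prob_space \<mu> using bp unfolding borel_prob_on_def by simp
    show ?thesis by (rule finite_measure_distr[OF id[OF bp]])
  qed
  have PB: "sets (PiM UNIV (\<lambda>_. borel :: nat measure)) = sets (borel :: (nat \<Rightarrow> nat) measure)"
    by (rule sets_PiM_equal_borel)
  have "distr \<mu>1 borel (\<lambda>x. x) = distr \<mu>2 borel (\<lambda>x. x)"
  proof (rule measure_eqI_PiM_infinite[where I=UNIV and M="\<lambda>_. borel :: nat measure"])
    fix B :: "nat \<Rightarrow> nat set" and J :: "nat set"
    assume J: "finite J" and B: "\<And>i. i \<in> J \<Longrightarrow> B i \<in> sets (borel :: nat measure)"
    obtain n where n: "J \<subseteq> {..<n}" using J finite_nat_bounded by blast
    have emb: "prod_emb UNIV (\<lambda>_. borel :: nat measure) J (Pi\<^sub>E J B) = {x. \<forall>i\<in>J. x i \<in> B i}"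
      by (auto simp: prod_emb_def space_PiM)
    have "prod_emb UNIV (\<lambda>_. borel :: nat measure) J (Pi\<^sub>E J B) \<in> sets borel"
      unfolding PB[symmetric] using J B by (intro sets_PiM_I) auto
    hence X: "{x. \<forall>i\<in>J. x i \<in> B i} \<in> sets borel" unfolding emb .
    let ?S = "{u\<in>words n. \<forall>i\<in>J. u ! i \<in> B i}"
    have dec: "{x. \<forall>i\<in>J. x i \<in> B i} \<inter> \<Omega> = (\<Union>u\<in>?S. \<Omega> \<inter> cyl u)"
      using finite_dim_set_as_cylinders[OF n, of B] by blast
    have "emeasure (distr \<mu> borel (\<lambda>x. x)) {x. \<forall>i\<in>J. x i \<in> B i} = ennreal (\<Sum>u\<in>?S. cyl_fun \<mu> u)"
      if bp: "borel_prob_on \<Omega> \<mu>" for \<mu>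
    proof -
      interpret prob_space \<mu> using bp unfolding borel_prob_on_def by simp
      show ?thesis unfolding ext[OF bp X] dec emeasure_eq_measure
        by (subst measure_cyl_Union[OF bp]) auto
    qed
    moreover have "(\<Sum>u\<in>?S. cyl_fun \<mu>1 u) = (\<Sum>u\<in>?S. cyl_fun \<mu>2 u)"
      using eq by (intro sum.cong) auto
    ultimately show "emeasure (distr \<mu>1 borel (\<lambda>x. x)) (prod_emb UNIV (\<lambda>_. borel) J (Pi\<^sub>E J B)) =
        emeasure (distr \<mu>2 borel (\<lambda>x. x)) (prod_emb UNIV (\<lambda>_. borel) J (Pi\<^sub>E J B))"
      unfolding emb using bp1 bp2 by simp
  qed (simp_all add: PB fin[OF bp1])
  show "\<mu>1 = \<mu>2"
  proof (rule measure_eqI)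
    show "sets \<mu>1 = sets \<mu>2" using bp1 bp2 unfolding borel_prob_on_def by simp
    fix X assume "X \<in> sets \<mu>1"
    hence X: "X \<subseteq> \<Omega>" "X \<in> sets borel"
      using bp1 SigmaA_borel[of m A] unfolding borel_prob_on_def by (simp_all add: sets_restrict_space_iff)
    have "emeasure \<mu>1 X = emeasure (distr \<mu>1 borel (\<lambda>x. x)) X"
      using ext[OF bp1 X(2)] X(1) by (simp add: Int_absorb2)
    also have "\<dots> = emeasure (distr \<mu>2 borel (\<lambda>x. x)) X"
      using \<open>distr \<mu>1 borel (\<lambda>x. x) = distr \<mu>2 borel (\<lambda>x. x)\<close> by simp
    also have "\<dots> = emeasure \<mu>2 X" using ext[OF bp2 X(2)] X(1) by (simp add: Int_absorb2)
    finally show "emeasure \<mu>1 X = emeasure \<mu>2 X" .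
  qed
qed

lemma alpha_as_image: "alpha m \<Omega> k = (\<lambda>u. \<Omega> \<inter> cyl u) ` {u\<in>words k. \<Omega> \<inter> cyl u \<noteq> {}}"
  unfolding alpha_def words_def by (simp add: setcompr_eq_image conj_assoc)

lemma inj_on_nonempty_cyl: "inj_on (\<lambda>u. \<Omega> \<inter> cyl u) {u\<in>words k. \<Omega> \<inter> cyl u \<noteq> {}}"
proof (rule inj_onI)
  fix u v assume u: "u \<in> {u\<in>words k. \<Omega> \<inter> cyl u \<noteq> {}}" and v: "v \<in> {u\<in>words k. \<Omega> \<inter> cyl u \<noteq> {}}"
    and e: "\<Omega> \<inter> cyl u = \<Omega> \<inter> cyl v"
  obtain x where x: "x \<in> \<Omega> \<inter> cyl u" using u by auto
  hence "x \<in> cyl v" using e by auto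
  have len: "length u = k" "length v = k" using u v by (simp_all add: words_def)
  show "u = v"
  proof (rule nth_equalityI)
    show "length u = length v" using len by simp
    fix i assume "i < length u"
    thus "u ! i = v ! i" using x \<open>x \<in> cyl v\<close> len unfolding cyl_def by force
  qed
qed

lemma markov_measure_iff:
  "markov_measure m \<Omega> p P \<mu> \<longleftrightarrow> borel_prob_on \<Omega> \<mu> \<and>
     (\<forall>u. u \<noteq> [] \<longrightarrow> set u \<subseteq> {..<m} \<longrightarrow> cyl_fun \<mu> u = markov_weight p P u)"
  unfolding markov_measure_def cyl_fun_def markov_weight_def ..

lemma markov_measure_unique:
  assumes "markov_measure m \<Omega> p P \<mu>1" and "markov_measure m \<Omega> p P \<mu>2"
  shows "\<mu>1 = \<mu>2"
proof (rule cylinders_determine_measure)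
  show bp: "borel_prob_on \<Omega> \<mu>1" "borel_prob_on \<Omega> \<mu>2"
    using assms unfolding markov_measure_def by auto
  fix n u assume u: "u \<in> words n"
  show "cyl_fun \<mu>1 u = cyl_fun \<mu>2 u"
  proof (cases "u = []")
    case True
    thus ?thesis using consistentD(1)[OF consistent_cyl_fun[OF bp(1)]]
        consistentD(1)[OF consistent_cyl_fun[OF bp(2)]] by simp
  next
    case False
    thus ?thesis using assms u unfolding markov_measure_iff words_def by simp
  qed
qed

end

section \<open>Existence of Markov measures\<close>

text \<open>A path is read off from independent choices: \<open>\<omega> 0 0\<close> is the initial letter and
  \<open>\<omega> (n+1)\<close> maps every current letter to the next one.\<close>
primrec chain_path :: "(nat \<Rightarrow> nat \<Rightarrow> nat) \<Rightarrow> nat \<Rightarrow> nat" where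
  "chain_path \<omega> 0 = \<omega> 0 0"
| "chain_path \<omega> (Suc n) = \<omega> (Suc n) (chain_path \<omega> n)"

lemma chain_path_prefix:
  "(\<forall>i<L. chain_path \<omega> i = u ! i) \<longleftrightarrow>
   (\<forall>k<L. if k = 0 then \<omega> 0 0 = u ! 0 else \<omega> k (u ! (k - 1)) = u ! k)"
proof (induction L)
  case (Suc L)
  have "(\<forall>i<Suc L. chain_path \<omega> i = u ! i) \<longleftrightarrow> (\<forall>i<L. chain_path \<omega> i = u ! i) \<and> chain_path \<omega> L = u ! L"
    by (auto simp: less_Suc_eq)
  also have "\<dots> \<longleftrightarrow> (\<forall>i<L. chain_path \<omega> i = u ! i) \<and>
      (if L = 0 then \<omega> 0 0 = u ! 0 else \<omega> L (u ! (L - 1)) = u ! L)"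
    by (cases L) auto
  also have "\<dots> \<longleftrightarrow> (\<forall>k<Suc L. if k = 0 then \<omega> 0 0 = u ! 0 else \<omega> k (u ! (k - 1)) = u ! k)"
    using Suc.IH by (auto simp: less_Suc_eq)
  finally show ?case .
qed simp

locale markov_chain_data = subshift +
  fixes p :: "nat \<Rightarrow> real" and P :: "nat \<Rightarrow> nat \<Rightarrow> real"
  assumes p_nonneg: "\<And>i. i < m \<Longrightarrow> 0 \<le> p i"
    and p_sum: "(\<Sum>i<m. p i) = 1"
    and P_nonneg: "\<And>i j. i < m \<Longrightarrow> j < m \<Longrightarrow> 0 \<le> P i j"
    and P_sum: "\<And>i. i < m \<Longrightarrow> (\<Sum>j<m. P i j) = 1"
    and P_allowed: "\<And>i j. i < m \<Longrightarrow> j < m \<Longrightarrow> P i j \<noteq> 0 \<Longrightarrow> A i j = 1"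
begin

definition init_pmf :: "nat pmf" where
  "init_pmf = embed_pmf (\<lambda>i. if i < m then p i else 0)"

definition row_pmf :: "nat \<Rightarrow> nat pmf" where
  "row_pmf i = embed_pmf (\<lambda>j. if j < m then P i j else 0)"

definition choice_pmf :: "nat \<Rightarrow> (nat \<Rightarrow> nat) pmf" where
  "choice_pmf k = (if k = 0 then map_pmf (\<lambda>i _. i) init_pmf else Pi_pmf {..<m} 0 row_pmf)"

definition choice_space :: "nat \<Rightarrow> (nat \<Rightarrow> nat) measure" where
  "choice_space k = restrict_space (measure_pmf (choice_pmf k)) (set_pmf (choice_pmf k))"

lemma pmf_embed_finite:
  assumes "\<And>x. 0 \<le> f x" "\<And>x. x \<ge> m \<Longrightarrow> f x = 0" "(\<Sum>x<m. f x) = 1"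
  shows "pmf (embed_pmf f) = f"
proof -
  have "(\<integral>\<^sup>+x. ennreal (f x) \<partial>count_space UNIV) = (\<Sum>x<m. ennreal (f x))"
    using assms(2) by (intro nn_integral_count_space') (auto simp: not_less)
  also have "\<dots> = ennreal (\<Sum>x<m. f x)" using assms(1) by (simp add: sum_ennreal)
  also have "\<dots> = 1" using assms(3) by simp
  finally show ?thesis using assms(1) by (intro ext pmf_embed_pmf) auto
qed

lemma pmf_init: "pmf init_pmf i = (if i < m then p i else 0)"
  unfolding init_pmf_def using p_nonneg p_sum by (subst pmf_embed_finite) auto

lemma pmf_row: "i < m \<Longrightarrow> pmf (row_pmf i) j = (if j < m then P i j else 0)"
  unfolding row_pmf_def using P_nonneg P_sum by (subst pmf_embed_finite) auto

lemma set_init: "set_pmf init_pmf \<subseteq> {..<m}"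
  by (auto simp: set_pmf_eq pmf_init split: if_splits)

lemma set_row: "i < m \<Longrightarrow> set_pmf (row_pmf i) \<subseteq> {j. j < m \<and> A i j = 1}"
  using P_allowed by (auto simp: set_pmf_eq pmf_row split: if_splits)

lemma prob_choice_space: "prob_space (choice_space k)"
  unfolding choice_space_def
  by (rule prob_space_restrict_space)
     (auto simp: emeasure_Int_set_pmf[of _ UNIV, simplified] measure_pmf.emeasure_space_1[simplified])

lemma sets_choice_space: "E \<subseteq> set_pmf (choice_pmf k) \<Longrightarrow> E \<in> sets (choice_space k)"
  unfolding choice_space_def by (subst sets_restrict_space_iff) auto

lemma product_choices: "product_prob_space choice_space"
  unfolding product_prob_space_def product_prob_space_axioms_def product_sigma_finite_def
  using prob_choice_space prob_space_imp_sigma_finite by blast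

abbreviation choices :: "(nat \<Rightarrow> nat \<Rightarrow> nat) measure" where
  "choices \<equiv> PiM UNIV choice_space"

lemma choice_in_set: "\<omega> \<in> space choices \<Longrightarrow> \<omega> k \<in> set_pmf (choice_pmf k)"
  by (auto simp: space_PiM choice_space_def space_restrict_space)

lemma successor_choice:
  assumes "\<omega> \<in> space choices" "i < m"
  shows "\<omega> (Suc n) i < m \<and> A i (\<omega> (Suc n) i) = 1"
proof -
  have "\<omega> (Suc n) \<in> PiE_dflt {..<m} 0 (set_pmf \<circ> row_pmf)"
    using choice_in_set[OF assms(1), of "Suc n"] by (simp add: choice_pmf_def set_Pi_pmf)
  thus ?thesis using set_row[OF assms(2)] assms(2) by (auto simp: PiE_dflt_def)
qed

lemma chain_path_in_subshift:
  assumes "\<omega> \<in> space choices"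
  shows "chain_path \<omega> \<in> \<Omega>"
proof -
  have lt: "chain_path \<omega> n < m" for n
  proof (induction n)
    case 0
    have "\<omega> 0 \<in> (\<lambda>i _. i) ` set_pmf init_pmf"
      using choice_in_set[OF assms, of 0] by (simp add: choice_pmf_def)
    thus ?case using set_init by auto
  qed (use successor_choice[OF assms] in simp)
  thus ?thesis using successor_choice[OF assms lt] by (simp add: SigmaA_def)
qed

lemma chain_path_measurable: "chain_path \<in> measurable choices (restrict_space borel \<Omega>)"
proof (rule measurable_restrict_space2)
  show "chain_path \<in> space choices \<rightarrow> \<Omega>" using chain_path_in_subshift by auto
  have eval: "(\<lambda>f. f i) \<in> measurable (choice_space k) (count_space UNIV)" for k i
    unfolding choice_space_def by (intro measurable_restrict_space1) simp
  have coord: "(\<lambda>\<omega>. \<omega> k i) \<in> measurable choices (count_space UNIV)" for k i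
    using measurable_comp[OF measurable_component_singleton[of k UNIV choice_space] eval]
    by (simp add: comp_def)
  have "(\<lambda>\<omega>. chain_path \<omega> n) \<in> measurable choices (count_space UNIV)" for n
  proof (induction n)
    case (Suc n)
    from measurable_compose_countable[OF coord[of "Suc n"] Suc] show ?case by simp
  qed (simp add: coord)
  hence "(\<lambda>\<omega>. chain_path \<omega> n) \<in> borel_measurable choices" for n
    using sets_borel_eq_count_space by (metis measurable_cong_sets)
  thus "chain_path \<in> borel_measurable choices" by (rule measurable_coordinatewise_then_product)
qed

definition chain_measure :: "(nat \<Rightarrow> nat) measure" where
  "chain_measure = distr choices (restrict_space borel \<Omega>) chain_path"

lemma borel_prob_chain_measure: "borel_prob_on \<Omega> chain_measure"
proof -
  interpret product_prob_space choice_space UNIV by (rule product_choices)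
  show ?thesis unfolding borel_prob_on_def chain_measure_def
    using prob_space_distr[OF chain_path_measurable] by simp
qed

lemma choice_prob:
  "measure (choice_space k) {f \<in> set_pmf (choice_pmf k). f i = j} =
   measure_pmf.prob (map_pmf (\<lambda>f. f i) (choice_pmf k)) {j}"
proof -
  have "measure (choice_space k) {f \<in> set_pmf (choice_pmf k). f i = j} =
      measure_pmf.prob (choice_pmf k) ({f. f i = j} \<inter> set_pmf (choice_pmf k))"
    unfolding choice_space_def by (subst measure_restrict_space) (auto intro: arg_cong[where f="measure _"])
  also have "\<dots> = measure_pmf.prob (choice_pmf k) {f. f i = j}" by (rule measure_Int_set_pmf)
  finally show ?thesis by (simp add: vimage_def)
qed

lemma choice_prob_0: "a < m \<Longrightarrow> measure (choice_space 0) {f \<in> set_pmf (choice_pmf 0). f 0 = a} = p a"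
  unfolding choice_prob by (simp add: choice_pmf_def pmf.map_comp comp_def measure_pmf_single pmf_init)

lemma choice_prob_Suc:
  "i < m \<Longrightarrow> j < m \<Longrightarrow> measure (choice_space (Suc k)) {f \<in> set_pmf (choice_pmf (Suc k)). f i = j} = P i j"
  unfolding choice_prob by (simp add: choice_pmf_def Pi_pmf_component measure_pmf_single pmf_row)

definition step_event :: "nat list \<Rightarrow> nat \<Rightarrow> (nat \<Rightarrow> nat) set" where
  "step_event u k = {f \<in> set_pmf (choice_pmf k). if k = 0 then f 0 = u ! 0 else f (u ! (k - 1)) = u ! k}"

lemma chain_path_cyl_preimage:
  shows "chain_path -` (\<Omega> \<inter> cyl u) \<inter> space choices =
    prod_emb UNIV choice_space {..<length u} (Pi\<^sub>E {..<length u} (step_event u))"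
proof (intro equalityI subsetI)
  fix \<omega> assume w: "\<omega> \<in> chain_path -` (\<Omega> \<inter> cyl u) \<inter> space choices"
  hence "\<forall>k<length u. if k = 0 then \<omega> 0 0 = u ! 0 else \<omega> k (u ! (k - 1)) = u ! k"
    unfolding chain_path_prefix[symmetric] by (auto simp: cyl_def)
  hence "\<forall>k<length u. \<omega> k \<in> step_event u k" using choice_in_set w by (auto simp: step_event_def)
  thus "\<omega> \<in> prod_emb UNIV choice_space {..<length u} (Pi\<^sub>E {..<length u} (step_event u))"
    using w by (auto simp: prod_emb_def space_PiM)
next
  fix \<omega> assume w: "\<omega> \<in> prod_emb UNIV choice_space {..<length u} (Pi\<^sub>E {..<length u} (step_event u))"
  hence sp: "\<omega> \<in> space choices" by (auto simp: prod_emb_def space_PiM)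
  have "\<forall>k<length u. \<omega> k \<in> step_event u k" using w by (auto simp: prod_emb_def)
  hence "\<forall>i<length u. chain_path \<omega> i = u ! i"
    unfolding chain_path_prefix by (auto simp: step_event_def)
  thus "\<omega> \<in> chain_path -` (\<Omega> \<inter> cyl u) \<inter> space choices"
    using chain_path_in_subshift[OF sp] sp by (auto simp: cyl_def)
qed

lemma cyl_fun_chain_measure:
  assumes u: "u \<noteq> []" "set u \<subseteq> {..<m}"
  shows "cyl_fun chain_measure u = markov_weight p P u"
proof -
  interpret product_prob_space choice_space UNIV by (rule product_choices)
  obtain n where n: "length u = Suc n" using u by (cases u) auto
  have ul: "k < length u \<Longrightarrow> u ! k < m" for k using u by (auto dest!: nth_mem)
  have "\<Omega> \<inter> cyl u \<in> sets (restrict_space borel \<Omega>)" by (subst sets_restrict_space_iff) auto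
  hence "cyl_fun chain_measure u = measure choices (chain_path -` (\<Omega> \<inter> cyl u) \<inter> space choices)"
    unfolding cyl_fun_def chain_measure_def by (rule measure_distr[OF chain_path_measurable])
  also have "\<dots> = measure choices (prod_emb UNIV choice_space {..<length u} (Pi\<^sub>E {..<length u} (step_event u)))"
    unfolding chain_path_cyl_preimage ..
  also have "\<dots> = (\<Prod>k<length u. measure (choice_space k) (step_event u k))"
    by (rule measure_PiM_emb) (auto simp: step_event_def intro!: sets_choice_space)
  also have "\<dots> = measure (choice_space 0) (step_event u 0) * (\<Prod>k<n. measure (choice_space (Suc k)) (step_event u (Suc k)))"
    unfolding n by (rule prod.lessThan_Suc_shift)
  also have "\<dots> = p (u ! 0) * (\<Prod>k<n. P (u ! k) (u ! Suc k))"
    using choice_prob_0[OF ul] choice_prob_Suc[OF ul ul] n by (simp add: step_event_def)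
  finally show ?thesis unfolding markov_weight_def n by simp
qed

theorem markov_measure_exists: "markov_measure m \<Omega> p P chain_measure"
  unfolding markov_measure_iff using borel_prob_chain_measure cyl_fun_chain_measure by simp

end

section \<open>The entropy decomposition\<close>

locale weighted_subshift = subshift +
  fixes q :: nat and t :: "nat \<Rightarrow> real"
  assumes m_ge_2: "m \<ge> 2" and q_ge_2: "q \<ge> 2"
    and A_01: "\<forall>i<m. \<forall>j<m. A i j \<in> {0, 1}"
    and t_gt_1: "\<forall>i<m. t i > 1"
    and t_eq: "\<forall>i<m. t i ^ q = (\<Sum>j<m. real (A i j) * t j)"
begin

definition tsum :: real where
  "tsum = (\<Sum>i<m. t i)"

definition p_init :: "nat \<Rightarrow> real" where
  "p_init i = t i / tsum"

definition p_trans :: "nat \<Rightarrow> nat \<Rightarrow> real" where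
  "p_trans i j = (if A i j = 1 then t j / t i ^ q else 0)"

text \<open>Weight of letter j after the word u, and the total weight of all continuations of u
  (the right-hand side of the defining equation of t, or tsum after the empty word).\<close>
definition succ_weight :: "nat list \<Rightarrow> nat \<Rightarrow> real" where
  "succ_weight u j = (if u = [] then t j else real (A (last u) j) * t j)"

definition total_weight :: "nat list \<Rightarrow> real" where
  "total_weight u = (if u = [] then tsum else t (last u) ^ q)"

definition pot :: "nat list \<Rightarrow> real" where
  "pot u = (if u = [] then ln tsum / q else ln (t (last u)))"

lemma t_pos: "i < m \<Longrightarrow> t i > 0"
  using t_gt_1 by force

lemma tsum_gt_1: "tsum > 1"
proof -
  have "t 0 \<le> tsum" unfolding tsum_def using m_ge_2 t_pos
    by (intro member_le_sum) (auto intro: less_imp_le)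
  thus ?thesis using t_gt_1 m_ge_2 by force
qed

lemma sum_succ_weight: "u \<in> words n \<Longrightarrow> (\<Sum>j<m. succ_weight u j) = total_weight u"
  using t_eq last_word_lt[of u n] by (auto simp: succ_weight_def total_weight_def tsum_def)

lemma total_weight_pos: "u \<in> words n \<Longrightarrow> total_weight u > 0"
  using tsum_gt_1 t_pos last_word_lt[of u n] by (auto simp: total_weight_def)

lemma ln_total_weight: "u \<in> words n \<Longrightarrow> ln (total_weight u) = real q * pot u"
  using q_ge_2 last_word_lt[of u n] t_pos by (auto simp: total_weight_def pot_def ln_realpow)

lemma succ_weight_nonneg: "j < m \<Longrightarrow> succ_weight u j \<ge> 0"
  using t_pos[of j] by (auto simp: succ_weight_def)

lemma pot_bounds: "u \<in> words n \<Longrightarrow> 0 \<le> pot u \<and> pot u \<le> ln tsum / q + (\<Sum>i<m. ln (t i))"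
proof -
  assume u: "u \<in> words n"
  have ln_t: "0 \<le> ln (t i)" if "i < m" for i using t_gt_1 that by force
  have "0 \<le> ln tsum / q" using tsum_gt_1 by simp
  moreover have "0 \<le> (\<Sum>i<m. ln (t i))" using ln_t by (intro sum_nonneg) auto
  moreover have "ln (t (last u)) \<le> (\<Sum>i<m. ln (t i))" if "u \<noteq> []"
    using ln_t last_word_lt[OF u that] by (intro member_le_sum) auto
  ultimately show ?thesis using ln_t last_word_lt[OF u] by (auto simp: pot_def)
qed

lemma succ_weight_zero:
  "consistent f \<Longrightarrow> j < m \<Longrightarrow> succ_weight u j = 0 \<Longrightarrow> f (u @ [j]) = 0"
  using t_pos[of j] consistentD(4)[of f u j] by (auto simp: succ_weight_def split: if_splits)

lemma ln_succ_weight: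
  assumes "consistent f"
  shows "f (u @ [j]) * ln (succ_weight u j) = f (u @ [j]) * pot (u @ [j])"
proof (cases "f (u @ [j]) = 0 \<or> u = []")
  case False
  hence "A (last u) j = 1" using consistentD(4)[OF assms] by blast
  thus ?thesis using False by (simp add: succ_weight_def pot_def)
qed (auto simp: succ_weight_def pot_def)

definition block_entropy :: "(nat list \<Rightarrow> real) \<Rightarrow> nat \<Rightarrow> real" where
  "block_entropy f n = (\<Sum>u\<in>words n. eta (f u))"

definition mean_pot :: "(nat list \<Rightarrow> real) \<Rightarrow> nat \<Rightarrow> real" where
  "mean_pot f n = (\<Sum>u\<in>words n. f u * pot u)"

definition local_defect :: "(nat list \<Rightarrow> real) \<Rightarrow> nat list \<Rightarrow> real" where
  "local_defect f u = (\<Sum>j<m. gibbs_gap (f u) (total_weight u) (succ_weight u j) (f (u @ [j])))"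

definition defect :: "(nat list \<Rightarrow> real) \<Rightarrow> nat \<Rightarrow> real" where
  "defect f n = (\<Sum>u\<in>words n. local_defect f u)"

definition total_defect :: "(nat list \<Rightarrow> real) \<Rightarrow> real" where
  "total_defect f = (\<Sum>n. defect f n / real q ^ Suc n)"

lemma local_defect:
  assumes f: "consistent f" and u: "u \<in> words n"
  shows "0 \<le> local_defect f u"
    and "local_defect f u = 0 \<longleftrightarrow> (\<forall>j<m. f (u @ [j]) = f u * succ_weight u j / total_weight u)"
proof -
  have gap: "0 \<le> gibbs_gap (f u) (total_weight u) (succ_weight u j) (f (u @ [j])) \<and>
      (gibbs_gap (f u) (total_weight u) (succ_weight u j) (f (u @ [j])) = 0 \<longleftrightarrow>
       f (u @ [j]) = f u * succ_weight u j / total_weight u)" if j: "j < m" for j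
  proof -
    have "f (u @ [j]) \<le> f u" unfolding consistentD(3)[OF f u]
      using j consistentD(2)[OF f] by (intro member_le_sum) auto
    thus ?thesis using gibbs_gap[OF total_weight_pos[OF u] succ_weight_nonneg[OF j]
        consistentD(2)[OF f]] succ_weight_zero[OF f j] by blast
  qed
  show "0 \<le> local_defect f u" unfolding local_defect_def using gap by (intro sum_nonneg) auto
  have "local_defect f u = 0 \<longleftrightarrow>
      (\<forall>j\<in>{..<m}. gibbs_gap (f u) (total_weight u) (succ_weight u j) (f (u @ [j])) = 0)"
    unfolding local_defect_def using gap by (intro sum_nonneg_eq_0_iff) auto
  also have "\<dots> \<longleftrightarrow> (\<forall>j<m. f (u @ [j]) = f u * succ_weight u j / total_weight u)" using gap by auto
  finally show "local_defect f u = 0 \<longleftrightarrow> (\<forall>j<m. f (u @ [j]) = f u * succ_weight u j / total_weight u)" .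
qed

lemma local_defect_expand:
  assumes f: "consistent f" and u: "u \<in> words n"
  shows "local_defect f u = eta (f u) + real q * (f u * pot u)
      - (\<Sum>j<m. f (u @ [j]) * pot (u @ [j])) - (\<Sum>j<m. eta (f (u @ [j])))"
proof -
  have F: "f u = (\<Sum>j<m. f (u @ [j]))" using consistentD(3)[OF f u] .
  have "local_defect f u = (\<Sum>j<m. f u * succ_weight u j / total_weight u) - (\<Sum>j<m. f (u @ [j]))
      - (\<Sum>j<m. f (u @ [j])) * ln (f u) - (\<Sum>j<m. f (u @ [j]) * ln (succ_weight u j))
      + (\<Sum>j<m. f (u @ [j])) * ln (total_weight u) - (\<Sum>j<m. eta (f (u @ [j])))"
    unfolding local_defect_def gibbs_gap_def by (simp add: sum_subtractf sum.distrib sum_distrib_right)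
  also have "(\<Sum>j<m. f u * succ_weight u j / total_weight u) = f u"
    using sum_succ_weight[OF u] total_weight_pos[OF u]
    by (simp add: sum_divide_distrib[symmetric] sum_distrib_left[symmetric])
  also have "(\<Sum>j<m. f (u @ [j]) * ln (succ_weight u j)) = (\<Sum>j<m. f (u @ [j]) * pot (u @ [j]))"
    by (intro sum.cong refl ln_succ_weight[OF f])
  finally show ?thesis unfolding F[symmetric] ln_total_weight[OF u] by (simp add: eta_def algebra_simps)
qed

lemma block_entropy_Suc:
  assumes f: "consistent f"
  shows "block_entropy f (Suc n) = block_entropy f n + real q * mean_pot f n - mean_pot f (Suc n) - defect f n"
proof -
  have "defect f n = block_entropy f n + real q * mean_pot f n
      - (\<Sum>u\<in>words n. \<Sum>j<m. f (u @ [j]) * pot (u @ [j])) - (\<Sum>u\<in>words n. \<Sum>j<m. eta (f (u @ [j])))"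
    unfolding defect_def block_entropy_def mean_pot_def using local_defect_expand[OF f]
    by (simp add: sum_subtractf sum.distrib sum_distrib_left)
  thus ?thesis unfolding block_entropy_def mean_pot_def sum_words_Suc by simp
qed

lemma defect_nonneg: "consistent f \<Longrightarrow> 0 \<le> defect f n"
  unfolding defect_def using local_defect(1) by (simp add: sum_nonneg)

lemma mean_pot_bounds:
  assumes f: "consistent f"
  shows "0 \<le> mean_pot f n" "mean_pot f n \<le> ln tsum / q + (\<Sum>i<m. ln (t i))"
proof -
  show "0 \<le> mean_pot f n" unfolding mean_pot_def
    using pot_bounds consistentD(2)[OF f] by (intro sum_nonneg) auto
  have "mean_pot f n \<le> (\<Sum>u\<in>words n. f u * (ln tsum / q + (\<Sum>i<m. ln (t i))))"
    unfolding mean_pot_def using pot_bounds consistentD(2)[OF f] by (intro sum_mono mult_left_mono) auto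
  also have "\<dots> = ln tsum / q + (\<Sum>i<m. ln (t i))"
    using consistent_sum_one[OF f] by (simp add: sum_distrib_right[symmetric])
  finally show "mean_pot f n \<le> ln tsum / q + (\<Sum>i<m. ln (t i))" .
qed

lemma entropy_series:
  assumes f: "consistent f"
  shows "summable (\<lambda>n. defect f n / real q ^ Suc n)"
    and "(\<lambda>k. block_entropy f (Suc k) / real q ^ (Suc k + 1)) sums
           ((ln tsum / q - total_defect f) / (real q - 1))"
proof -
  have Q: "real q \<ge> 2" using q_ge_2 by simp
  have a0: "block_entropy f 0 = 0" and b0: "mean_pot f 0 = ln tsum / q"
    using consistentD(1)[OF f] by (simp_all add: block_entropy_def mean_pot_def words_0 eta_def pot_def)
  have a_nonneg: "0 \<le> block_entropy f n" for n
    unfolding block_entropy_def using consistentD(2)[OF f] consistent_le_one[OF f]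
    by (intro sum_nonneg eta_nonneg) auto
  note series = nonneg_recursion_series[OF Q a0 block_entropy_Suc[OF f] a_nonneg
      defect_nonneg[OF f] mean_pot_bounds[OF f]]
  show "summable (\<lambda>n. defect f n / real q ^ Suc n)" by (rule series(1))
  show "(\<lambda>k. block_entropy f (Suc k) / real q ^ (Suc k + 1)) sums
      ((ln tsum / q - total_defect f) / (real q - 1))"
    using series(2) unfolding b0 total_defect_def .
qed

lemma total_defect_nonneg: "consistent f \<Longrightarrow> 0 \<le> total_defect f"
  unfolding total_defect_def using defect_nonneg by (intro suminf_nonneg entropy_series(1)) auto

lemma total_defect_eq_0_iff:
  assumes f: "consistent f"
  shows "total_defect f = 0 \<longleftrightarrow>
    (\<forall>n. \<forall>u\<in>words n. \<forall>j<m. f (u @ [j]) = f u * succ_weight u j / total_weight u)"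
proof -
  have "total_defect f = 0 \<longleftrightarrow> (\<forall>n. defect f n / real q ^ Suc n = 0)"
    unfolding total_defect_def using defect_nonneg[OF f]
    by (intro suminf_eq_zero_iff entropy_series(1)[OF f]) auto
  also have "\<dots> \<longleftrightarrow> (\<forall>n. \<forall>u\<in>words n. local_defect f u = 0)"
    using q_ge_2 local_defect(1)[OF f] finite_words by (simp add: defect_def sum_nonneg_eq_0_iff)
  finally show ?thesis using local_defect(2)[OF f] by auto
qed

lemma markov_weight_step:
  assumes u: "u \<in> words n" and j: "j < m"
  shows "markov_weight p_init p_trans (u @ [j]) =
    (if u = [] then 1 else markov_weight p_init p_trans u) * succ_weight u j / total_weight u"
proof (cases "u = []")
  case False
  have "A (last u) j \<noteq> 1 \<Longrightarrow> A (last u) j = 0" using A_01 last_word_lt[OF u False] j by force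
  thus ?thesis using False markov_weight_snoc[OF False]
    by (auto simp: succ_weight_def total_weight_def p_trans_def)
qed (simp add: markov_weight_def succ_weight_def total_weight_def p_init_def)

lemma follows_weights_iff_markov:
  assumes f: "consistent f"
  shows "(\<forall>n. \<forall>u\<in>words n. \<forall>j<m. f (u @ [j]) = f u * succ_weight u j / total_weight u) \<longleftrightarrow>
    (\<forall>u. u \<noteq> [] \<longrightarrow> set u \<subseteq> {..<m} \<longrightarrow> f u = markov_weight p_init p_trans u)"
proof -
  show ?thesis
  proof
    assume rec: "\<forall>n. \<forall>u\<in>words n. \<forall>j<m. f (u @ [j]) = f u * succ_weight u j / total_weight u"
    show "\<forall>u. u \<noteq> [] \<longrightarrow> set u \<subseteq> {..<m} \<longrightarrow> f u = markov_weight p_init p_trans u"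
    proof (intro allI)
      fix u show "u \<noteq> [] \<longrightarrow> set u \<subseteq> {..<m} \<longrightarrow> f u = markov_weight p_init p_trans u"
      proof (induction u rule: rev_induct)
        case (snoc j v)
        show ?case
        proof (intro impI)
          assume s: "set (v @ [j]) \<subseteq> {..<m}"
          hence v: "v \<in> words (length v)" and j: "j < m" by (auto simp: words_def)
          have "f (v @ [j]) = f v * succ_weight v j / total_weight v" using rec v j by blast
          moreover have "f v = (if v = [] then 1 else markov_weight p_init p_trans v)"
            using snoc.IH s consistentD(1)[OF f] by auto
          ultimately show "f (v @ [j]) = markov_weight p_init p_trans (v @ [j])" using markov_weight_step[OF v j] by simp
        qed
      qed simp
    qed
  next
    assume mk: "\<forall>u. u \<noteq> [] \<longrightarrow> set u \<subseteq> {..<m} \<longrightarrow> f u = markov_weight p_init p_trans u"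
    show "\<forall>n. \<forall>u\<in>words n. \<forall>j<m. f (u @ [j]) = f u * succ_weight u j / total_weight u"
    proof (intro allI ballI impI)
      fix n u j assume u: "u \<in> words n" and j: "j < m"
      hence "set (u @ [j]) \<subseteq> {..<m}" "set u \<subseteq> {..<m}" by (auto simp: words_def)
      hence "f (u @ [j]) = markov_weight p_init p_trans (u @ [j])"
        and "f u = (if u = [] then 1 else markov_weight p_init p_trans u)"
        using mk consistentD(1)[OF f] by auto
      thus "f (u @ [j]) = f u * succ_weight u j / total_weight u" using markov_weight_step[OF u j] by simp
    qed
  qed
qed

section \<open>The dimension functional\<close>

lemma Hm_alpha: "Hm m \<mu> (alpha m \<Omega> k) = block_entropy (cyl_fun \<mu>) k / ln (real m)"
proof -
  have "Hm m \<mu> (alpha m \<Omega> k) =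
      - (\<Sum>u\<in>{u\<in>words k. \<Omega> \<inter> cyl u \<noteq> {}}. cyl_fun \<mu> u * log (real m) (cyl_fun \<mu> u))"
    unfolding Hm_def alpha_as_image by (subst sum.reindex[OF inj_on_nonempty_cyl]) (simp add: cyl_fun_def)
  also have "(\<Sum>u\<in>{u\<in>words k. \<Omega> \<inter> cyl u \<noteq> {}}. cyl_fun \<mu> u * log (real m) (cyl_fun \<mu> u))
      = (\<Sum>u\<in>words k. cyl_fun \<mu> u * log (real m) (cyl_fun \<mu> u))"
    by (rule sum.mono_neutral_left) (auto simp: finite_words cyl_fun_def)
  finally show ?thesis
    unfolding block_entropy_def eta_def log_def by (simp add: sum_divide_distrib sum_negf[symmetric])
qed

definition s_max :: real where
  "s_max = (real q - 1) * (ln tsum / q) / ln (real m)"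

lemma s_dim_formula:
  assumes "borel_prob_on \<Omega> \<mu>"
  shows "s_dim m q \<Omega> \<mu> = s_max - (real q - 1) * total_defect (cyl_fun \<mu>) / ln (real m)"
proof -
  define D where "D = total_defect (cyl_fun \<mu>)"
  have "(\<lambda>k. Hm m \<mu> (alpha m \<Omega> (Suc k)) / real q ^ (Suc k + 1)) =
      (\<lambda>k. block_entropy (cyl_fun \<mu>) (Suc k) / real q ^ (Suc k + 1) / ln (real m))"
    by (simp add: Hm_alpha mult.commute)
  hence "(\<lambda>k. Hm m \<mu> (alpha m \<Omega> (Suc k)) / real q ^ (Suc k + 1)) sums
      ((ln tsum / q - D) / (real q - 1) / ln (real m))"
    using sums_divide[OF entropy_series(2)[OF consistent_cyl_fun[OF assms]], of "ln (real m)"]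
    unfolding D_def by simp
  hence "s_dim m q \<Omega> \<mu> = (real q - 1)\<^sup>2 * ((ln tsum / q - D) / (real q - 1) / ln (real m))"
    unfolding s_dim_def by (simp add: sums_iff)
  also have "\<dots> = s_max - (real q - 1) * D / ln (real m)"
  proof -
    have "real q - 1 \<noteq> 0" "ln (real m) \<noteq> 0" using q_ge_2 m_ge_2 by auto
    thus ?thesis unfolding s_max_def by (simp add: power2_eq_square field_simps)
  qed
  finally show ?thesis unfolding D_def .
qed

lemma s_dim_le_max:
  assumes "borel_prob_on \<Omega> \<mu>"
  shows "s_dim m q \<Omega> \<mu> \<le> s_max"
proof -
  have "0 \<le> (real q - 1) * total_defect (cyl_fun \<mu>) / ln (real m)"
    using total_defect_nonneg[OF consistent_cyl_fun[OF assms]] q_ge_2 m_ge_2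
    by (intro divide_nonneg_nonneg mult_nonneg_nonneg) auto
  thus ?thesis using s_dim_formula[OF assms] by linarith
qed

lemma s_dim_eq_max_iff:
  assumes "borel_prob_on \<Omega> \<mu>"
  shows "s_dim m q \<Omega> \<mu> = s_max \<longleftrightarrow> markov_measure m \<Omega> p_init p_trans \<mu>"
proof -
  have "real q - 1 \<noteq> 0" "ln (real m) \<noteq> 0" using q_ge_2 m_ge_2 by auto
  hence "s_dim m q \<Omega> \<mu> = s_max \<longleftrightarrow> total_defect (cyl_fun \<mu>) = 0"
    unfolding s_dim_formula[OF assms] by simp
  also have "\<dots> \<longleftrightarrow> markov_measure m \<Omega> p_init p_trans \<mu>"
    unfolding total_defect_eq_0_iff[OF consistent_cyl_fun[OF assms]]
      follows_weights_iff_markov[OF consistent_cyl_fun[OF assms]] markov_measure_iff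
    using assms by simp
  finally show ?thesis .
qed

lemma markov_chain_data: "markov_chain_data m A p_init p_trans"
proof
  show "0 \<le> p_init i" if "i < m" for i
    using t_pos[OF that] tsum_gt_1 by (simp add: p_init_def)
  show "(\<Sum>i<m. p_init i) = 1"
    using tsum_gt_1 by (simp add: p_init_def tsum_def sum_divide_distrib[symmetric])
  show "0 \<le> p_trans i j" if "i < m" "j < m" for i j
    using t_pos[OF that(1)] t_pos[OF that(2)] by (simp add: p_trans_def)
  show "(\<Sum>j<m. p_trans i j) = 1" if i: "i < m" for i
  proof -
    have "p_trans i j = real (A i j) * t j / t i ^ q" if "j < m" for j
    proof -
      have "A i j \<in> {0, 1}" using A_01 i that by blast
      thus ?thesis by (auto simp: p_trans_def)
    qed
    hence "(\<Sum>j<m. p_trans i j) = (\<Sum>j<m. real (A i j) * t j) / t i ^ q"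
      unfolding sum_divide_distrib by simp
    also have "\<dots> = t i ^ q / t i ^ q" using t_eq i by simp
    also have "\<dots> = 1" using t_pos[OF i] by simp
    finally show ?thesis .
  qed
  show "A i j = 1" if "i < m" "j < m" "p_trans i j \<noteq> 0" for i j
    using that by (simp add: p_trans_def split: if_splits)
qed

end

theorem corollary2p6:
  fixes m q :: nat and A :: "nat \<Rightarrow> nat \<Rightarrow> nat" and t :: "nat \<Rightarrow> real"
  assumes "m \<ge> 2" and "q \<ge> 2"
    and "\<forall>i<m. \<forall>j<m. A i j \<in> {0, 1}"
    and "primitive m A"
    and "\<forall>i<m. t i > 1"
    and "\<forall>i<m. t i ^ q = (\<Sum>j<m. real (A i j) * t j)"
  shows "(\<exists>!\<mu>. borel_prob_on (SigmaA m A) \<mu> \<and>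
              (\<forall>\<nu>. borel_prob_on (SigmaA m A) \<nu> \<longrightarrow> s_dim m q (SigmaA m A) \<nu> \<le> s_dim m q (SigmaA m A) \<mu>)) \<and>
         (\<forall>\<mu>. borel_prob_on (SigmaA m A) \<mu> \<and>
              (\<forall>\<nu>. borel_prob_on (SigmaA m A) \<nu> \<longrightarrow> s_dim m q (SigmaA m A) \<nu> \<le> s_dim m q (SigmaA m A) \<mu>)
          \<longrightarrow> markov_measure m (SigmaA m A) (\<lambda>i. t i / (\<Sum>k<m. t k))
                (\<lambda>i j. if A i j = 1 then t j / t i ^ q else 0) \<mu>)"
proof -
  interpret weighted_subshift m A q t using assms by unfold_locales auto
  let ?markov = "markov_measure m \<Omega> p_init p_trans"
  let ?maximizer = "\<lambda>\<mu>. borel_prob_on \<Omega> \<mu> \<and> (\<forall>\<nu>. borel_prob_on \<Omega> \<nu> \<longrightarrow> s_dim m q \<Omega> \<nu> \<le> s_dim m q \<Omega> \<mu>)"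
  obtain \<mu>\<^sub>0 where \<mu>\<^sub>0: "?markov \<mu>\<^sub>0"
    using markov_chain_data.markov_measure_exists[OF markov_chain_data] by blast
  have bp: "?markov \<mu> \<Longrightarrow> borel_prob_on \<Omega> \<mu>" for \<mu> by (simp add: markov_measure_def)
  txt \<open>Since the Markov measure attains the upper bound s_max, the maximizers are exactly the
    measures attaining s_max, i.e. the Markov measures; these are unique.\<close>
  have maximizer_iff: "?maximizer \<mu> \<longleftrightarrow> ?markov \<mu>" for \<mu>
  proof
    assume max: "?maximizer \<mu>"
    hence "s_max \<le> s_dim m q \<Omega> \<mu>" using s_dim_eq_max_iff[OF bp] bp \<mu>\<^sub>0 by metis
    thus "?markov \<mu>" using max s_dim_le_max s_dim_eq_max_iff by force
  qed (use s_dim_eq_max_iff[OF bp] s_dim_le_max bp in simp)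
  have "(\<lambda>i. t i / (\<Sum>k<m. t k)) = p_init" "(\<lambda>i j. if A i j = 1 then t j / t i ^ q else 0) = p_trans"
    by (simp_all add: fun_eq_iff p_init_def tsum_def p_trans_def)
  thus ?thesis unfolding maximizer_iff using \<mu>\<^sub>0 markov_measure_unique by auto
qed

end
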